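(* Let $\mu$ be a probability measure on $\mathbb{Z}$ and let $0<b<1/4$ and $0\le c<1$. If $|\hat{\mu}(t)|\le c$ for all $t$ with $b\le |t|<1/2$, then $$|\hat{\mu}(t)|\le 1-\frac{1-c^2}{8b^2}\,t^2\quad\text{for all } |t|\le b.$$
   Context: The Fourier transform of a probability measure $\mu$ on $\mathbb{Z}$ is $\hat{\mu}(t)=\sum_{k\in\mathbb{Z}}\mu(k)e^{2\pi ikt}$, $t\in[-1/2,1/2)$. *)

theory Defs
  imports "HOL-Probability.Probability"
begin

definition fourier_pmf :: "int pmf \<Rightarrow> real \<Rightarrow> complex" where
  "fourier_pmf \<mu> t = (\<Sum>\<^sub>\<infinity>k\<in>(UNIV::int set). complex_of_real (pmf \<mu> k) * exp (2 * pi * \<i> * of_int k * of_real t))"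

end

theory Submission
  imports Defs
begin

(* Write \<mu>^(t) = E[e_t] with the character e_t(k) = exp(2\<pi>ik t), a random
   variable of modulus one.  For any unit-modulus random variable Z, rotating E[Z] onto the
   positive real axis and applying Jensen to X = Re(wZ) gives the doubling inequality
   2|E Z|^2 - 1 \<le> |E Z^2|; since e_{2t} = e_t^2 this yields 1 - |\<mu>^(2t)| \<le> 4 (1 - |\<mu>^(t)|),
   and by induction 1 - |\<mu>^(2^n t)| \<le> 4^n (1 - |\<mu>^(t)|).
   Given 0 < |t| \<le> b, choose n with b \<le> 2^n |t| < 2b; there |\<mu>^| \<le> c by hypothesis, so
   1 - c \<le> 4^n (1 - |\<mu>^(t)|) with 4^n t^2 < 4 b^2, i.e. 1 - |\<mu>^(t)| \<ge> (1-c) t^2 / (4b^2),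
   which is at least (1-c^2) t^2 / (8 b^2) since (1+c)/2 \<le> 1.
   The file proves the doubling inequality for general probability spaces, transfers it to
   Fourier transforms of integer pmfs, iterates it, and then combines it with the dyadic
   scaling lemma and an elementary inequality to obtain the theorem. *)

lemma rotate_to_modulus:
  fixes z :: complex
  obtains w where "cmod w = 1" "w * z = of_real (cmod z)"
proof (cases "z = 0")
  case False
  have "cnj z / of_real (cmod z) * z = (z * cnj z) / of_real (cmod z)" by simp
  also have "\<dots> = of_real (cmod z)" using False
    by (simp add: complex_norm_square[symmetric] power2_eq_square)
  finally show ?thesis using False by (intro that[of "cnj z / of_real (cmod z)"]) (auto simp: norm_divide)
qed (use that[of 1] in simp)

lemma Re_square_unit:
  fixes u :: complex
  assumes "cmod u = 1"
  shows "Re (u^2) = 2 * (Re u)^2 - 1"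
proof -
  have "(Re u)^2 + (Im u)^2 = 1" using assms by (metis cmod_power2 one_power2)
  then show ?thesis by (simp add: power2_eq_square algebra_simps)
qed

lemma (in prob_space) square_expectation_le:
  fixes X :: "'a \<Rightarrow> real"
  assumes "integrable M X" "integrable M (\<lambda>x. (X x)^2)"
  shows "(expectation X)^2 \<le> expectation (\<lambda>x. (X x)^2)"
proof -
  have "0 \<le> variance X" by (rule variance_positive)
  then show ?thesis using variance_eq[OF assms] by linarith
qed

text \<open>Rotating the mean onto the
  positive axis by w, the real part X = Re(wZ) has mean |E Z| and E Re((wZ)^2) = 2 E X^2 - 1.\<close>
lemma (in prob_space) unit_modulus_doubling:
  fixes Z :: "'a \<Rightarrow> complex"
  assumes Z_meas: "Z \<in> borel_measurable M" and Z_unit: "\<And>x. x \<in> space M \<Longrightarrow> cmod (Z x) = 1"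
  shows "2 * (cmod (expectation Z))^2 - 1 \<le> cmod (expectation (\<lambda>x. (Z x)^2))"
proof -
  obtain w where w_unit: "cmod w = 1" and wz: "w * expectation Z = of_real (cmod (expectation Z))"
    using rotate_to_modulus by blast
  define X where "X = (\<lambda>x. Re (w * Z x))"
  have wZ_unit: "cmod (w * Z x) = 1" if "x \<in> space M" for x
    using Z_unit[OF that] w_unit by (simp add: norm_mult)
  have X_bound: "\<bar>X x\<bar> \<le> 1" if "x \<in> space M" for x
    using abs_Re_le_cmod[of "w * Z x"] wZ_unit[OF that] by (simp add: X_def)
  have X_meas: "X \<in> borel_measurable M" unfolding X_def using Z_meas by measurable
  have int_X: "integrable M X" and int_X2: "integrable M (\<lambda>x. (X x)^2)"
    using X_bound X_meas by (auto intro!: integrable_const_bound[where B=1] simp: abs_square_le_1)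
  have int_wZ: "integrable M (\<lambda>x. w * Z x)" and int_wZ2: "integrable M (\<lambda>x. (w * Z x)^2)"
    using Z_meas wZ_unit by (auto intro!: integrable_const_bound[where B=1] simp: norm_power)
  have mean_X: "expectation X = cmod (expectation Z)"
    using integral_Re[OF int_wZ] wz by (simp add: X_def)
  have "Re (w^2 * expectation (\<lambda>x. (Z x)^2)) = expectation (\<lambda>x. Re ((w * Z x)^2))"
    using integral_Re[OF int_wZ2] by (simp add: power_mult_distrib)
  also have "\<dots> = expectation (\<lambda>x. 2 * (X x)^2 - 1)"
    using Re_square_unit[OF wZ_unit] by (intro Bochner_Integration.integral_cong) (auto simp: X_def)
  also have "\<dots> = 2 * expectation (\<lambda>x. (X x)^2) - 1"
    using int_X2 by (simp add: prob_space)
  finally have Re_rotated: "Re (w^2 * expectation (\<lambda>x. (Z x)^2)) = 2 * expectation (\<lambda>x. (X x)^2) - 1" .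
  have "Re (w^2 * expectation (\<lambda>x. (Z x)^2)) \<le> cmod (expectation (\<lambda>x. (Z x)^2))"
    using complex_Re_le_cmod by (metis mult_cancel_right1 norm_mult norm_power power_one w_unit)
  then show ?thesis
    using Re_rotated square_expectation_le[OF int_X int_X2] mean_X by simp
qed

definition character :: "real \<Rightarrow> int \<Rightarrow> complex" where
  "character t k = exp (2 * pi * \<i> * of_int k * of_real t)"

lemma norm_character [simp]: "cmod (character t k) = 1"
  by (simp add: character_def norm_exp_eq_Re)

lemma character_double: "character (2 * t) k = (character t k)^2"
  by (simp add: character_def exp_double[symmetric] algebra_simps)

lemma fourier_pmf_expectation:
  "fourier_pmf \<mu> t = measure_pmf.expectation \<mu> (character t)"
proof -
  have summable: "Infinite_Set_Sum.abs_summable_on (\<lambda>k. pmf \<mu> k *\<^sub>R character t k) UNIV"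
  proof -
    have "Infinite_Sum.abs_summable_on (pmf \<mu>) UNIV"
      using pmf_abs_summable abs_summable_equivalent by blast
    then have "(\<lambda>k. pmf \<mu> k) summable_on UNIV" by simp
    then have "(\<lambda>k. norm (pmf \<mu> k *\<^sub>R character t k)) summable_on UNIV" by simp
    then show ?thesis using abs_summable_equivalent by blast
  qed
  have "measure_pmf.expectation \<mu> (character t) = integral\<^sup>L (count_space UNIV) (\<lambda>k. pmf \<mu> k *\<^sub>R character t k)"
    unfolding measure_pmf_eq_density by (subst integral_density) (auto simp: pmf_nonneg)
  also have "\<dots> = (\<Sum>\<^sub>\<infinity>k. pmf \<mu> k *\<^sub>R character t k)"
    using infsetsum_infsum[OF summable] by (simp add: infsetsum_def)
  finally show ?thesis by (simp add: fourier_pmf_def character_def scaleR_conv_of_real)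
qed

lemma fourier_pmf_le_1: "cmod (fourier_pmf \<mu> t) \<le> 1"
  using integral_norm_bound[of "measure_pmf \<mu>" "character t"]
  by (simp add: fourier_pmf_expectation)

lemma fourier_pmf_gap_double: "1 - cmod (fourier_pmf \<mu> (2 * t)) \<le> 4 * (1 - cmod (fourier_pmf \<mu> t))"
proof -
  have "character (2 * t) = (\<lambda>k. (character t k)^2)"
    by (simp add: fun_eq_iff character_double)
  then have "2 * (cmod (fourier_pmf \<mu> t))^2 - 1 \<le> cmod (fourier_pmf \<mu> (2 * t))"
    using measure_pmf.unit_modulus_doubling[of "character t" \<mu>]
    by (simp add: fourier_pmf_expectation)
  moreover have "0 \<le> (cmod (fourier_pmf \<mu> t) - 1)^2" by simp
  ultimately show ?thesis by (simp add: power2_eq_square algebra_simps)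
qed

lemma fourier_pmf_gap_iterate: "1 - cmod (fourier_pmf \<mu> (2^n * t)) \<le> 4^n * (1 - cmod (fourier_pmf \<mu> t))"
proof (induction n)
  case (Suc n)
  have "1 - cmod (fourier_pmf \<mu> (2^Suc n * t)) \<le> 4 * (1 - cmod (fourier_pmf \<mu> (2^n * t)))"
    using fourier_pmf_gap_double[of \<mu> "2^n * t"] by (simp add: mult.assoc)
  also have "\<dots> \<le> 4 * (4^n * (1 - cmod (fourier_pmf \<mu> t)))" using Suc by simp
  finally show ?case by simp
qed simp

lemma dyadic_scale_into_window:
  fixes s b :: real assumes "0 < s" "s \<le> b"
  obtains n :: nat where "b \<le> 2^n * s" "2^n * s < 2 * b"
proof -
  obtain m :: nat where "b / s < 2^m" using real_arch_pow[of 2 "b / s"] by auto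
  then have reach: "b \<le> 2^m * s" using assms by (simp add: field_simps)
  define n where "n = (LEAST n::nat. b \<le> 2^n * s)"
  have lower: "b \<le> 2^n * s" unfolding n_def by (rule LeastI[of _ m]) (rule reach)
  have "2^n * s < 2 * b"
  proof (cases n)
    case (Suc k)
    then have "\<not> b \<le> 2^k * s" using not_less_Least[of k "\<lambda>n. b \<le> 2^n * s"] n_def by auto
    then show ?thesis using Suc by simp
  qed (use assms in simp)
  then show ?thesis using lower that by blast
qed

lemma gap_to_quadratic_bound:
  fixes b c r t :: real
  assumes "0 < b" "0 \<le> c" "c < 1" "r \<le> 1"
    and window: "2^n * \<bar>t\<bar> < 2 * b" and gap: "1 - c \<le> 4^n * (1 - r)"
  shows "r \<le> 1 - (1 - c^2) / (8 * b^2) * t^2"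
proof -
  have "(4::real)^n = (2^n)^2" by (simp add: power2_eq_square flip: power_mult_distrib)
  then have "4^n * t^2 = (2^n * \<bar>t\<bar>)^2" by (simp add: power_mult_distrib)
  also have "\<dots> \<le> (2 * b)^2" using window by (intro power_mono) auto
  finally have scaled: "4^n * t^2 \<le> 4 * b^2" by simp
  have "(1 - c) * t^2 \<le> 4^n * t^2 * (1 - r)"
    using mult_right_mono[OF gap, of "t^2"] by (simp add: algebra_simps)
  also have "\<dots> \<le> 4 * b^2 * (1 - r)" using scaled assms(4) by (intro mult_right_mono) auto
  finally have linear_gap: "(1 - c) * t^2 / (4 * b^2) \<le> 1 - r"
    using assms(1) by (simp add: divide_le_eq mult.commute)
  have "(1 - c^2) / (8 * b^2) * t^2 = (1 - c) * t^2 * ((1 + c) / 2) / (4 * b^2)"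
    by (simp add: field_simps power2_eq_square)
  also have "\<dots> \<le> (1 - c) * t^2 / (4 * b^2)"
    using assms(2,3) by (intro divide_right_mono mult_left_mono) (auto intro: mult_left_mono)
  finally show ?thesis using linear_gap by simp
qed

theorem lemma2p1p5:
  fixes \<mu> :: "int pmf" and b c :: real
  assumes "0 < b" and "b < 1/4" and "0 \<le> c" and "c < 1"
    and "\<And>t. b \<le> \<bar>t\<bar> \<Longrightarrow> \<bar>t\<bar> < 1/2 \<Longrightarrow> cmod (fourier_pmf \<mu> t) \<le> c"
  shows "\<forall>t. \<bar>t\<bar> \<le> b \<longrightarrow> cmod (fourier_pmf \<mu> t) \<le> 1 - (1 - c^2) / (8 * b^2) * t^2"
proof (intro allI impI)
  fix t :: real assume "\<bar>t\<bar> \<le> b"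
  show "cmod (fourier_pmf \<mu> t) \<le> 1 - (1 - c^2) / (8 * b^2) * t^2"
  proof (cases "t = 0")
    case True then show ?thesis using fourier_pmf_le_1[of \<mu> 0] by simp
  next
    case False
    then obtain n :: nat where lower: "b \<le> 2^n * \<bar>t\<bar>" and upper: "2^n * \<bar>t\<bar> < 2 * b"
      using dyadic_scale_into_window[of "\<bar>t\<bar>" b] \<open>\<bar>t\<bar> \<le> b\<close> by auto
    have "cmod (fourier_pmf \<mu> (2^n * t)) \<le> c"
      using assms(5)[of "2^n * t"] lower upper assms(2) by (simp add: abs_mult)
    then have "1 - c \<le> 4^n * (1 - cmod (fourier_pmf \<mu> t))"
      using fourier_pmf_gap_iterate[of \<mu> n t] by simp
    then show ?thesis
      using gap_to_quadratic_bound[OF assms(1,3,4) fourier_pmf_le_1 upper] by blast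
  qed
qed

end
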